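(* Let $n\in\mathbb{Z}$ and let $\{a_i\}_{i\in\mathbb{Z}}$ be any strictly increasing sequence of integers. Then $$\sum_{i=-\infty}^{\infty}\left(\frac{1}{2|n-a_i|+1}-\frac{1}{2\big(|n-a_i|+(a_i-a_{i-1})\big)+1}\right)\le\frac43.$$ If furthermore $a_i-a_{i-1}\ge 2$ for all $i\in\mathbb{Z}$, then the same sum is at most $1+\frac15+\frac17-\frac19$. *)

theory Defs
  imports "HOL-Analysis.Analysis"
begin

definition lemma2_term :: "int \<Rightarrow> (int \<Rightarrow> int) \<Rightarrow> int \<Rightarrow> real" where
  "lemma2_term n a i =
     1 / (2 * real_of_int \<bar>n - a i\<bar> + 1)
   - 1 / (2 * (real_of_int \<bar>n - a i\<bar> + real_of_int (a i - a (i - 1))) + 1)"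

end

theory Submission
  imports Defs
begin

text \<open>
  Write \<open>f x = 1 / (2 x + 1)\<close>, choose \<open>k\<close> with \<open>a k \<le> n < a (k + 1)\<close> and put
  \<open>x = n - a k\<close>, \<open>y = a (k + 1) - n\<close>; let \<open>c\<close> be a lower bound for the gaps.
  For \<open>i \<le> k\<close> the summands are \<open>f (n - a i) - f (n - a (i - 1))\<close> and telescope to at
  most \<open>f x\<close>. The summand at \<open>k + 1\<close> is \<open>f y - f (2 y + x)\<close>. For \<open>i \<ge> k + 2\<close> the
  summand has the form \<open>f u - f (u + g)\<close> with \<open>g\<close> the gap and \<open>u = a i - n \<ge> a (i - 1) - n + c\<close>;
  since \<open>f u - f (u + g)\<close> decreases in \<open>u\<close>, it is at most
  \<open>f (a (i - 1) - n + c) - f (a i - n + c)\<close>, and these telescope to at most \<open>f (y + c)\<close>.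
  Every finite partial sum is therefore at most \<open>f x + f y - f (2 y + x) + f (y + c)\<close>,
  which is bounded by distinguishing \<open>x = 0\<close> from \<open>x \<ge> 1\<close>, using for \<open>x = 0\<close> that
  \<open>f y - f (2 y)\<close> decreases for \<open>y \<ge> 1/2\<close>.
\<close>

definition odd_recip :: "real \<Rightarrow> real" where
  "odd_recip x = 1 / (2 * x + 1)"

lemma odd_recip_nonneg: "0 \<le> x \<Longrightarrow> 0 \<le> odd_recip x"
  unfolding odd_recip_def by simp

lemma odd_recip_antimono: "0 \<le> x \<Longrightarrow> x \<le> y \<Longrightarrow> odd_recip y \<le> odd_recip x"
  unfolding odd_recip_def by (intro divide_left_mono) auto

lemma odd_recip_numerals:
  "odd_recip 0 = 1" "odd_recip 1 = 1/3" "odd_recip 2 = 1/5" "odd_recip 3 = 1/7" "odd_recip 4 = 1/9"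
  by (simp_all add: odd_recip_def)

lemma odd_recip_diff:
  "0 \<le> u \<Longrightarrow> 0 \<le> g \<Longrightarrow>
    odd_recip u - odd_recip (u + g) = 2 * g / ((2 * u + 1) * (2 * (u + g) + 1))"
  unfolding odd_recip_def by (simp add: field_simps)

lemma odd_recip_diff_antimono:
  assumes "0 \<le> u" "u \<le> v" "0 \<le> g"
  shows "odd_recip v - odd_recip (v + g) \<le> odd_recip u - odd_recip (u + g)"
proof -
  have "(2 * u + 1) * (2 * (u + g) + 1) \<le> (2 * v + 1) * (2 * (v + g) + 1)"
    using assms by (intro mult_mono) auto
  then have "2 * g / ((2 * v + 1) * (2 * (v + g) + 1)) \<le> 2 * g / ((2 * u + 1) * (2 * (u + g) + 1))"
    using assms by (intro divide_left_mono) auto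
  with assms show ?thesis
    by (simp add: odd_recip_diff)
qed

lemma odd_recip_diff_double_antimono:
  assumes "1/2 \<le> y" "y \<le> z"
  shows "odd_recip z - odd_recip (2 * z) \<le> odd_recip y - odd_recip (2 * y)"
proof -
  have diff: "odd_recip x - odd_recip (2 * x) = 2 * x / ((2 * x + 1) * (4 * x + 1))" if "0 \<le> x" for x
    using that unfolding odd_recip_def by (simp add: field_simps)
  have "(z - y) * (8 * y * z - 1) \<ge> 0"
    using assms mult_mono[of "1/2" y "1/2" z] by (intro mult_nonneg_nonneg) auto
  then have "2 * z * ((2 * y + 1) * (4 * y + 1)) \<le> 2 * y * ((2 * z + 1) * (4 * z + 1))"
    by (simp add: algebra_simps)
  then have "2 * z / ((2 * z + 1) * (4 * z + 1)) \<le> 2 * y / ((2 * y + 1) * (4 * y + 1))"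
    using assms by (simp add: divide_simps)
  with assms show ?thesis
    by (simp add: diff)
qed

lemma strict_mono_int_diff_ge:
  fixes a :: "int \<Rightarrow> int"
  assumes "strict_mono a" "i \<le> j"
  shows "j - i \<le> a j - a i"
  using \<open>i \<le> j\<close>
proof (induction j rule: int_ge_induct)
  case base
  show ?case by simp
next
  case (step j)
  moreover have "a j < a (j + 1)"
    using \<open>strict_mono a\<close> by (rule strict_monoD) simp
  ultimately show ?case by linarith
qed

lemma strict_mono_int_bracket:
  fixes a :: "int \<Rightarrow> int"
  assumes "strict_mono a"
  obtains k where "a k \<le> n" "n < a (k + 1)"
proof -
  have "\<exists>k. a k \<le> n \<and> n < a (k + 1)"
  proof (rule ccontr)
    assume no_bracket: "\<nexists>k. a k \<le> n \<and> n < a (k + 1)"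
    define i0 where "i0 = min 0 (n - a 0)"
    have "a i0 \<le> n"
      using strict_mono_int_diff_ge[OF assms, of i0 0] by (simp add: i0_def)
    have below: "a (i0 + int m) \<le> n" for m
    proof (induction m)
      case 0
      show ?case using \<open>a i0 \<le> n\<close> by simp
    next
      case (Suc m)
      then have "\<not> n < a (i0 + int m + 1)"
        using no_bracket by blast
      then show ?case
        by (simp add: ac_simps)
    qed
    define j where "j = i0 + int (nat (n - a i0) + 1)"
    have "j - i0 \<le> a j - a i0"
      by (rule strict_mono_int_diff_ge[OF assms]) (simp add: j_def)
    with below[of "nat (n - a i0) + 1"] \<open>a i0 \<le> n\<close> show False
      by (simp add: j_def)
  qed
  with that show ?thesis by blast
qed

lemma lemma2_term_eq:
  "lemma2_term n a i = odd_recip \<bar>n - a i\<bar> - odd_recip (\<bar>n - a i\<bar> + (a i - a (i - 1)))"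
  unfolding lemma2_term_def odd_recip_def by simp

lemma lemma2_term_nonneg:
  assumes "strict_mono a"
  shows "0 \<le> lemma2_term n a i"
proof -
  have "a (i - 1) < a i"
    using assms by (rule strict_monoD) simp
  then show ?thesis
    unfolding lemma2_term_eq by (simp add: odd_recip_antimono)
qed

lemma lemma2_term_below:
  "a i \<le> n \<Longrightarrow> lemma2_term n a i = odd_recip (n - a i) - odd_recip (n - a (i - 1))"
  unfolding lemma2_term_eq by simp

lemma lemma2_term_straddle:
  "a (i - 1) \<le> n \<Longrightarrow> n < a i \<Longrightarrow>
    lemma2_term n a i = odd_recip (a i - n) - odd_recip (2 * (a i - n) + (n - a (i - 1)))"
  unfolding lemma2_term_eq by (simp add: algebra_simps)

lemma lemma2_term_above_le:
  assumes "n < a (i - 1)" "0 \<le> c" "c \<le> a i - a (i - 1)"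
  shows "lemma2_term n a i \<le> odd_recip (a (i - 1) - n + c) - odd_recip (a i - n + c)"
proof -
  have "lemma2_term n a i
      = odd_recip (of_int (a i - n)) - odd_recip (of_int (a i - n) + of_int (a i - a (i - 1)))"
    using assms unfolding lemma2_term_eq by simp
  also have "\<dots> \<le> odd_recip (of_int (a (i - 1) - n + c))
      - odd_recip (of_int (a (i - 1) - n + c) + of_int (a i - a (i - 1)))"
    using assms by (intro odd_recip_diff_antimono) auto
  finally show ?thesis
    by (simp add: algebra_simps)
qed

lemma sum_int_interval_le_telescope:
  fixes t h :: "int \<Rightarrow> 'a :: ordered_ab_group_add"
  assumes "lo \<le> hi" "\<And>i. lo < i \<Longrightarrow> i \<le> hi \<Longrightarrow> t i \<le> h (i - 1) - h i"
  shows "(\<Sum>i\<in>{lo<..hi}. t i) \<le> h lo - h hi"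
  using assms
proof (induction hi rule: int_ge_induct)
  case base
  show ?case by simp
next
  case (step hi)
  have "{lo<..hi + 1} = insert (hi + 1) {lo<..hi}"
    using step.hyps by auto
  then have "(\<Sum>i\<in>{lo<..hi + 1}. t i) = t (hi + 1) + (\<Sum>i\<in>{lo<..hi}. t i)"
    by simp
  also have "\<dots> \<le> (h hi - h (hi + 1)) + (h lo - h hi)"
  proof (rule add_mono)
    show "t (hi + 1) \<le> h hi - h (hi + 1)"
      using step.hyps step.prems[of "hi + 1"] by simp
    show "sum t {lo<..hi} \<le> h lo - h hi"
      by (rule step.IH) (simp add: step.prems)
  qed
  finally show ?case
    by (simp add: algebra_simps)
qed

lemma lemma2_term_sum_below_le:
  assumes mono: "strict_mono a" and "a k \<le> n" "lo \<le> k"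
  shows "sum (lemma2_term n a) {lo<..k} \<le> odd_recip (n - a k)"
proof -
  have below: "a i \<le> n" if "i \<le> k" for i
    using strict_mono_int_diff_ge[OF mono that] that \<open>a k \<le> n\<close> by linarith
  then have "sum (lemma2_term n a) {lo<..k} \<le> - odd_recip (n - a lo) - - odd_recip (n - a k)"
    using \<open>lo \<le> k\<close> by (intro sum_int_interval_le_telescope) (simp_all add: lemma2_term_below)
  moreover have "0 \<le> odd_recip (n - a lo)"
    using below[OF \<open>lo \<le> k\<close>] by (intro odd_recip_nonneg) simp
  ultimately show ?thesis
    by simp
qed

lemma lemma2_term_sum_above_le:
  assumes mono: "strict_mono a" and "n < a m" "m \<le> hi"
    and gaps: "0 \<le> c" "\<And>i. c \<le> a i - a (i - 1)"
  shows "sum (lemma2_term n a) {m<..hi} \<le> odd_recip (a m - n + c)"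
proof -
  have above: "n < a i" if "m \<le> i" for i
    using strict_mono_int_diff_ge[OF mono that] that \<open>n < a m\<close> by linarith
  then have "sum (lemma2_term n a) {m<..hi} \<le> odd_recip (a m - n + c) - odd_recip (a hi - n + c)"
    using \<open>m \<le> hi\<close> gaps by (intro sum_int_interval_le_telescope lemma2_term_above_le) auto
  moreover have "0 \<le> odd_recip (a hi - n + c)"
    using above[OF \<open>m \<le> hi\<close>] gaps by (intro odd_recip_nonneg) simp
  ultimately show ?thesis
    by simp
qed

lemma lemma2_term_finite_sum_le:
  fixes n c :: int and a :: "int \<Rightarrow> int"
  assumes mono: "strict_mono a" and bracket: "a k \<le> n" "n < a (k + 1)"
    and gaps: "0 \<le> c" "\<And>i. c \<le> a i - a (i - 1)" and "finite S"
  shows "sum (lemma2_term n a) S \<le> odd_recip (n - a k)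
    + (odd_recip (a (k + 1) - n) - odd_recip (2 * (a (k + 1) - n) + (n - a k)))
    + odd_recip (a (k + 1) - n + c)"
proof -
  obtain lo hi where "S \<subseteq> {lo<..hi}" "lo \<le> k" "k + 1 \<le> hi"
  proof -
    obtain l u where "\<forall>i\<in>S. l \<le> i" "\<forall>i\<in>S. i \<le> u"
      using bdd_below_finite[OF \<open>finite S\<close>] bdd_above_finite[OF \<open>finite S\<close>]
      unfolding bdd_below_def bdd_above_def by blast
    then have "S \<subseteq> {min k (l - 1)<..max (k + 1) u}"
      by fastforce
    then show ?thesis
      by (rule that) simp_all
  qed
  have split: "{lo<..hi} = {lo<..k} \<union> insert (k + 1) {k + 1<..hi}"
    using \<open>lo \<le> k\<close> \<open>k + 1 \<le> hi\<close> by auto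
  have "sum (lemma2_term n a) S \<le> sum (lemma2_term n a) {lo<..hi}"
    using \<open>S \<subseteq> {lo<..hi}\<close> by (intro sum_mono2) (auto intro: lemma2_term_nonneg[OF mono])
  also have "\<dots> = sum (lemma2_term n a) {lo<..k} + lemma2_term n a (k + 1)
      + sum (lemma2_term n a) {k + 1<..hi}"
    unfolding split by (subst sum.union_disjoint) auto
  also have "\<dots> \<le> odd_recip (n - a k)
      + (odd_recip (a (k + 1) - n) - odd_recip (2 * (a (k + 1) - n) + (n - a k)))
      + odd_recip (a (k + 1) - n + c)"
    using lemma2_term_sum_below_le[OF mono \<open>a k \<le> n\<close> \<open>lo \<le> k\<close>]
      lemma2_term_straddle[of a "k + 1" n] bracket
      lemma2_term_sum_above_le[OF mono \<open>n < a (k + 1)\<close> \<open>k + 1 \<le> hi\<close> gaps]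
    by (intro add_mono) simp_all
  finally show ?thesis .
qed

lemma bracket_bound_gap1:
  fixes x y :: int
  assumes "0 \<le> x" "1 \<le> y"
  shows "odd_recip x + (odd_recip y - odd_recip (2 * y + x)) + odd_recip (y + 1) \<le> 4/3"
proof (cases "x = 0")
  case True
  consider "y = 1" | "2 \<le> y"
    using assms by linarith
  then show ?thesis
  proof cases
    case 1
    with True show ?thesis by (simp add: odd_recip_numerals)
  next
    case 2
    then have "odd_recip y - odd_recip (2 * y) \<le> odd_recip 2 - odd_recip (2 * 2)"
      using odd_recip_diff_double_antimono[of 2 "of_int y"] by simp
    moreover have "odd_recip (y + 1) \<le> odd_recip 3"
      using 2 by (intro odd_recip_antimono) simp_all
    ultimately show ?thesis
      using True by (simp add: odd_recip_numerals)
  qed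
next
  case False
  then have "odd_recip x \<le> odd_recip 1"
    using assms by (intro odd_recip_antimono) simp_all
  moreover have "odd_recip y \<le> odd_recip 1" "odd_recip (y + 1) \<le> odd_recip 2"
    using assms by (intro odd_recip_antimono; simp)+
  moreover have "0 \<le> odd_recip (2 * y + x)"
    using assms by (intro odd_recip_nonneg) simp
  ultimately show ?thesis
    by (simp add: odd_recip_numerals)
qed

lemma bracket_bound_gap2:
  fixes x y :: int
  assumes "0 \<le> x" "1 \<le> y" "2 \<le> x + y"
  shows "odd_recip x + (odd_recip y - odd_recip (2 * y + x)) + odd_recip (y + 2)
    \<le> 1 + 1/5 + 1/7 - 1/9"
proof (cases "x = 0")
  case True
  then have "odd_recip y - odd_recip (2 * y) \<le> odd_recip 2 - odd_recip (2 * 2)"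
    using assms odd_recip_diff_double_antimono[of 2 "of_int y"] by simp
  moreover have "odd_recip (y + 2) \<le> odd_recip 4"
    using True assms by (intro odd_recip_antimono) simp_all
  ultimately show ?thesis
    using True by (simp add: odd_recip_numerals)
next
  case False
  then have "odd_recip x \<le> odd_recip 1"
    using assms by (intro odd_recip_antimono) simp_all
  moreover have "odd_recip y \<le> odd_recip 1" "odd_recip (y + 2) \<le> odd_recip 3"
    using assms by (intro odd_recip_antimono; simp)+
  moreover have "0 \<le> odd_recip (2 * y + x)"
    using assms by (intro odd_recip_nonneg) simp
  ultimately show ?thesis
    by (simp add: odd_recip_numerals)
qed

theorem lemma2:
  fixes n :: int and a :: "int \<Rightarrow> int"
  assumes "strict_mono a"
  shows "lemma2_term n a summable_on (UNIV :: int set)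
       \<and> (\<Sum>\<^sub>\<infinity>i\<in>(UNIV :: int set). lemma2_term n a i) \<le> 4 / 3
       \<and> ((\<forall>i. a i - a (i - 1) \<ge> 2) \<longrightarrow>
            (\<Sum>\<^sub>\<infinity>i\<in>(UNIV :: int set). lemma2_term n a i) \<le> 1 + 1/5 + 1/7 - 1/9)"
proof -
  obtain k where bracket: "a k \<le> n" "n < a (k + 1)"
    using strict_mono_int_bracket[OF assms] .
  have gaps1: "1 \<le> a i - a (i - 1)" for i
    using strict_monoD[OF assms, of "i - 1" i] by simp
  note finite_sum_le = lemma2_term_finite_sum_le[OF assms bracket]
  have bound1: "sum (lemma2_term n a) S \<le> 4/3" if "finite S" for S
    using finite_sum_le[OF _ gaps1 that] bracket_bound_gap1[of "n - a k" "a (k + 1) - n"] bracket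
    by (simp add: add.commute)
  have summable: "lemma2_term n a summable_on UNIV"
    using bound1 lemma2_term_nonneg[OF assms]
    by (intro nonneg_bdd_above_summable_on bdd_aboveI[where M = "4/3"]) auto
  moreover have "(\<Sum>\<^sub>\<infinity>i\<in>UNIV. lemma2_term n a i) \<le> 4/3"
    using summable bound1 by (rule infsum_le_finite_sums)
  moreover have "(\<Sum>\<^sub>\<infinity>i\<in>UNIV. lemma2_term n a i) \<le> 1 + 1/5 + 1/7 - 1/9"
    if gaps2: "\<forall>i. 2 \<le> a i - a (i - 1)"
  proof (rule infsum_le_finite_sums[OF summable])
    fix S :: "int set"
    assume "finite S"
    then show "sum (lemma2_term n a) S \<le> 1 + 1/5 + 1/7 - 1/9"
      using finite_sum_le[of 2 S] gaps2 bracket_bound_gap2[of "n - a k" "a (k + 1) - n"]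
        bracket gaps2[rule_format, of "k + 1"]
      by (simp add: add.commute)
  qed
  ultimately show ?thesis by blast
qed

end
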